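(* Let $0 < 1/r_1 \ll \tau, 1/K$ where $\tau<1$, $K\ge1$ and $1-\tau-7\tau^{1/4}/K>0$. If $\mathcal H$ is an $n$-vertex linear hypergraph in which every edge $e$ satisfies $|e|\ge r_1$, then there is a linear ordering $\preceq$ of the edges of $\mathcal H$ such that at least one of the following holds. (a) Every $e\in\mathcal H$ satisfies $d^{\preceq}(e)\le(1-\tau)n$. (b) There is a set $W\subseteq\mathcal H$ such that (W1) $\max_{e\in W}|e| \le (1+3\tau^{1/4}K^4)\min_{e\in W}|e|$ and (W2) $\mathrm{vol}(W) \ge \frac{(1-\tau-7\tau^{1/4}/K)^2}{1+3\tau^{1/4}K^4}$; moreover, if $e^*$ is the last edge of $W$ in $\preceq$, then (O1) every $f\in\mathcal H$ with $e^*\preceq f$ and $f\ne e^*$ satisfies $d^{\preceq}(f)\le(1-\tau)n$, and (O2) for all $e,f\in\mathcal H$ with $f\preceq e\preceq e^*$ we have $|f|\ge|e|$.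
   Context: A hypergraph has a finite vertex set and a set of nonempty edges; linear means any two distinct edges share at most one vertex. For an edge $e$, $N(e)$ is the set of edges $f\ne e$ with $f\cap e\ne\varnothing$. Given a linear ordering $\preceq$ of the edges (reflexive), $d^{\preceq}(e)$ is the number of $f\in N(e)$ with $f\preceq e$. The normalised volume of a set $W$ of edges of an $n$-vertex hypergraph is $\mathrm{vol}(W)=\sum_{e\in W}\binom{|e|}{2}/\binom n2$. Hierarchy: $0<1/r_1\ll\tau,1/K$ means the statement holds whenever $r_1$ is sufficiently large as a function of $\tau$ and $K$. *)

theory Defs
  imports Main "HOL-Library.Extended_Real"
begin

definition hypergraph :: "'a set \<Rightarrow> 'a set set \<Rightarrow> bool" where
  "hypergraph V E \<longleftrightarrow> finite V \<and> (\<forall>e\<in>E. e \<subseteq> V \<and> e \<noteq> {})"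

definition linear_hypergraph :: "'a set \<Rightarrow> 'a set set \<Rightarrow> bool" where
  "linear_hypergraph V E \<longleftrightarrow> hypergraph V E \<and>
     (\<forall>e\<in>E. \<forall>f\<in>E. e \<noteq> f \<longrightarrow> card (e \<inter> f) \<le> 1)"

definition nbhd :: "'a set set \<Rightarrow> 'a set \<Rightarrow> 'a set set" where
  "nbhd E e = {f \<in> E. f \<noteq> e \<and> f \<inter> e \<noteq> {}}"

text \<open>d^R(e) for a (reflexive) linear order R on the edges: (f,e) \<in> R means f \<preceq> e.\<close>
definition back_deg :: "'a set set \<Rightarrow> ('a set \<times> 'a set) set \<Rightarrow> 'a set \<Rightarrow> nat" where
  "back_deg E R e = card {f \<in> nbhd E e. (f, e) \<in> R}"

definition vol :: "nat \<Rightarrow> 'a set set \<Rightarrow> real" where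
  "vol n W = (\<Sum>e\<in>W. real (card e choose 2)) / real (n choose 2)"

end

(*
  Greedily delete edges with at most (1 - tau) n neighbours among the remaining edges. Listing
  the surviving core C first, by decreasing size, and then the deleted edges in reverse order of
  deletion gives an order in which every edge outside C has back-degree at most (1 - tau) n.
  If C is nonempty, let e* be its smallest edge, of size k, and W the edges of C of size at most
  (1 + delta) k, where delta = 3 tau^(1/4) K^4. Every edge of C has more than (1 - tau) n neighbours in C; since e* has a vertex
  of degree above (1 - tau) n / k and edges through a common vertex are disjoint elsewhere, the
  degrees in C sum to about (1 - tau)^2 n^2 / k. At each vertex the edges of C longer than
  (1 + delta) k can carry only about (n - 1) / ((1 + delta) k) of these incidences, which forces
  the volume of W up to (1 - tau - 7 tau^(1/4) / K)^2 / (1 + delta).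
*)
theory Submission
  imports Defs
begin

section \<open>Orders given by lists\<close>

definition list_order :: "'b list \<Rightarrow> 'b rel" where
  "list_order xs = {(xs!i, xs!j) | i j. i \<le> j \<and> j < length xs}"

lemma list_order_nth_iff:
  assumes "distinct xs" "i < length xs" "j < length xs"
  shows "(xs!i, xs!j) \<in> list_order xs \<longleftrightarrow> i \<le> j"
proof
  assume "(xs!i, xs!j) \<in> list_order xs"
  then obtain i' j' where "xs!i = xs!i'" "xs!j = xs!j'" "i' \<le> j'" "j' < length xs"
    unfolding list_order_def by auto
  then show "i \<le> j" using assms nth_eq_iff_index_eq by (metis le_less_trans)
qed (use assms in \<open>auto simp: list_order_def\<close>)

lemma list_order_subset: "list_order xs \<subseteq> set xs \<times> set xs"
  unfolding list_order_def by auto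

lemma list_orderE:
  assumes "(x, y) \<in> list_order xs"
  obtains i j where "i \<le> j" "j < length xs" "x = xs!i" "y = xs!j"
  using assms unfolding list_order_def by blast

lemma linear_order_on_list_order:
  assumes "distinct xs"
  shows "linear_order_on (set xs) (list_order xs)"
proof -
  have "refl_on (set xs) (list_order xs)"
  proof (rule refl_onI)
    fix x assume "x \<in> set xs"
    then obtain i where "i < length xs" "x = xs!i" by (auto simp: in_set_conv_nth)
    then show "(x, x) \<in> list_order xs" unfolding list_order_def by blast
  qed
  moreover have "trans (list_order xs)"
  proof (rule transI)
    fix x y z assume "(x, y) \<in> list_order xs" "(y, z) \<in> list_order xs"
    then obtain i j j' l where ij: "i \<le> j" "j < length xs" "x = xs!i" "y = xs!j"
      and jl: "j' \<le> l" "l < length xs" "y = xs!j'" "z = xs!l"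
      by (elim list_orderE)
    have "j = j'" using ij jl assms by (simp add: nth_eq_iff_index_eq)
    then have "i \<le> l" using ij jl by simp
    then show "(x, z) \<in> list_order xs" using ij(3) jl(2,4) unfolding list_order_def by blast
  qed
  moreover have "antisym (list_order xs)"
  proof (rule antisymI)
    fix x y assume xy: "(x, y) \<in> list_order xs" and yx: "(y, x) \<in> list_order xs"
    then obtain i j where ij: "i \<le> j" "j < length xs" "x = xs!i" "y = xs!j"
      by (elim list_orderE)
    then have "j \<le> i" using yx list_order_nth_iff[OF assms] by simp
    then show "x = y" using ij by simp
  qed
  moreover have "total_on (set xs) (list_order xs)"
  proof (rule total_onI)
    fix x y assume "x \<in> set xs" "y \<in> set xs" "x \<noteq> y"
    then obtain i j where "i < length xs" "j < length xs" "x = xs!i" "y = xs!j"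
      by (auto simp: in_set_conv_nth)
    then show "(x, y) \<in> list_order xs \<or> (y, x) \<in> list_order xs"
      using list_order_nth_iff[OF assms] by (simp add: nat_le_linear)
  qed
  ultimately show ?thesis using list_order_subset
    unfolding linear_order_on_def partial_order_on_def preorder_on_def by blast
qed

lemma list_order_predecessors:
  assumes "distinct xs" "j < length xs"
  shows "{f. (f, xs!j) \<in> list_order xs} = set (take (Suc j) xs)"
proof -
  have "{f. (f, xs!j) \<in> list_order xs} = {xs!i | i. i \<le> j}"
  proof safe
    fix f assume "(f, xs!j) \<in> list_order xs"
    then obtain i j' where "f = xs!i" "xs!j = xs!j'" "i \<le> j'" "j' < length xs"
      unfolding list_order_def by auto
    then show "\<exists>i. f = xs!i \<and> i \<le> j" using assms nth_eq_iff_index_eq by metis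
  next
    fix i assume "i \<le> j"
    then show "(xs!i, xs!j) \<in> list_order xs" using assms unfolding list_order_def by auto
  qed
  also have "\<dots> = set (take (Suc j) xs)"
    using assms(2) by (force simp: in_set_conv_nth less_Suc_eq_le)
  finally show ?thesis .
qed

lemma list_order_append_prefix:
  assumes "distinct (cs @ ps)" "y \<in> set cs"
  shows "(x, y) \<in> list_order (cs @ ps) \<longleftrightarrow> (x, y) \<in> list_order cs"
proof
  assume "(x, y) \<in> list_order (cs @ ps)"
  then obtain i j where ij: "i \<le> j" "j < length (cs @ ps)" "x = (cs @ ps)!i" "y = (cs @ ps)!j"
    by (elim list_orderE)
  obtain j' where j': "j' < length cs" "y = cs!j'"
    using assms(2) by (auto simp: in_set_conv_nth)
  have "(cs @ ps)!j' = y" "j' < length (cs @ ps)"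
    using j' by (simp_all add: nth_append)
  then have "j = j'" using ij assms(1) by (simp add: nth_eq_iff_index_eq)
  then have "x = cs!i" "i \<le> j'" using ij j' by (simp_all add: nth_append)
  then show "(x, y) \<in> list_order cs" using j' unfolding list_order_def by blast
next
  assume "(x, y) \<in> list_order cs"
  then obtain i j where ij: "i \<le> j" "j < length cs" "x = cs!i" "y = cs!j"
    by (elim list_orderE)
  then have "x = (cs @ ps)!i" "y = (cs @ ps)!j" "j < length (cs @ ps)"
    by (simp_all add: nth_append)
  then show "(x, y) \<in> list_order (cs @ ps)" using ij(1) unfolding list_order_def by blast
qed

lemma list_order_last_iff:
  assumes "cs \<noteq> []"
  shows "(x, last cs) \<in> list_order cs \<longleftrightarrow> x \<in> set cs"
proof
  assume "(x, last cs) \<in> list_order cs"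
  then show "x \<in> set cs" using list_order_subset by blast
next
  assume "x \<in> set cs"
  then obtain i where "i < length cs" "x = cs!i" by (auto simp: in_set_conv_nth)
  then show "(x, last cs) \<in> list_order cs"
    using assms unfolding list_order_def last_conv_nth[OF assms] by fastforce
qed

lemma list_order_sorted_wrt:
  assumes "sorted_wrt P xs" "(x, y) \<in> list_order xs" "x \<noteq> y"
  shows "P x y"
  using assms unfolding list_order_def by (auto simp: sorted_wrt_iff_nth_less le_less)

lemma list_order_append_last:
  assumes "distinct (cs @ ps)" "cs \<noteq> []" "sorted_wrt P cs" "\<And>x. P x x"
  shows "(x, last cs) \<in> list_order (cs @ ps) \<longleftrightarrow> x \<in> set cs"
    and "e \<in> set cs \<Longrightarrow> (f, e) \<in> list_order (cs @ ps) \<Longrightarrow> P f e"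
proof -
  show "(x, last cs) \<in> list_order (cs @ ps) \<longleftrightarrow> x \<in> set cs"
    using list_order_append_prefix[OF assms(1)] list_order_last_iff[OF assms(2)] assms(2) by simp
  show "P f e" if "e \<in> set cs" "(f, e) \<in> list_order (cs @ ps)"
    using list_order_append_prefix[OF assms(1) that(1)] list_order_sorted_wrt[OF assms(3)]
      that(2) assms(4) by metis
qed

section \<open>Greedy peeling\<close>

lemma nbhd_insert_self: "nbhd (insert e X) e = nbhd X e"
  unfolding nbhd_def by auto

lemma nbhd_remove_self: "nbhd (X - {e}) e = nbhd X e"
  unfolding nbhd_def by auto

lemma back_deg_list_order:
  assumes "distinct xs" "set xs = E" "j < length xs"
  shows "back_deg E (list_order xs) (xs!j) = card (nbhd (set (take j xs)) (xs!j))"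
proof -
  have "{f \<in> nbhd E (xs!j). (f, xs!j) \<in> list_order xs} = nbhd (set (take (Suc j) xs)) (xs!j)"
    using list_order_predecessors[OF assms(1,3)] assms(2) set_take_subset[of "Suc j" xs]
    unfolding nbhd_def by auto
  also have "\<dots> = nbhd (set (take j xs)) (xs!j)"
    using assms(3) by (simp add: take_Suc_conv_app_nth nbhd_insert_self)
  finally show ?thesis unfolding back_deg_def by simp
qed

lemma back_deg_list_order_append:
  assumes "distinct (cs @ ps)" "set (cs @ ps) = E" "i < length ps"
  shows "back_deg E (list_order (cs @ ps)) (ps!i) = card (nbhd (set cs \<union> set (take i ps)) (ps!i))"
  using back_deg_list_order[OF assms(1,2), of "length cs + i"] assms(3) by simp

text \<open>Repeatedly delete an edge with at most \<open>t\<close> neighbours among the remaining ones;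
  \<open>ps\<close> lists the deleted edges in reverse order of deletion.\<close>
lemma exists_core_and_peeling_sequence:
  fixes t :: real
  assumes "finite F"
  shows "\<exists>C ps. C \<subseteq> F \<and> distinct ps \<and> set ps = F - C \<and>
     (\<forall>e\<in>C. t < real (card (nbhd C e))) \<and>
     (\<forall>i<length ps. real (card (nbhd (C \<union> set (take i ps)) (ps!i))) \<le> t)"
  using assms
proof (induction "card F" arbitrary: F rule: less_induct)
  case less
  show ?case
  proof (cases "\<exists>g\<in>F. real (card (nbhd F g)) \<le> t")
    case False
    then show ?thesis by (intro exI[of _ F] exI[of _ "[]"]) auto
  next
    case True
    then obtain g where g: "g \<in> F" "real (card (nbhd F g)) \<le> t" by auto
    have "card (F - {g}) < card F" using g less.prems by (meson card_Diff1_less)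
    then obtain C ps where IH: "C \<subseteq> F - {g}" "distinct ps" "set ps = F - {g} - C"
      "\<forall>e\<in>C. t < real (card (nbhd C e))"
      "\<forall>i<length ps. real (card (nbhd (C \<union> set (take i ps)) (ps!i))) \<le> t"
      using less.hyps[of "F - {g}"] less.prems by auto
    have "C \<union> set ps = F - {g}" using IH(1,3) by blast
    then have "nbhd (C \<union> set ps) g = nbhd F g" by (simp add: nbhd_remove_self)
    then have "real (card (nbhd (C \<union> set (take i (ps @ [g]))) ((ps @ [g]) ! i))) \<le> t"
      if "i < length (ps @ [g])" for i
      using IH(5) g(2) that by (cases "i < length ps") (simp_all add: nth_append)
    moreover have "C \<subseteq> F" "distinct (ps @ [g])" "set (ps @ [g]) = F - C"
      using IH(1-3) g(1) by auto
    ultimately show ?thesis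
      using IH(4) by (intro exI[of _ C] exI[of _ "ps @ [g]"] conjI allI impI) simp_all
  qed
qed

lemma exists_order_with_core_first:
  fixes t :: real
  assumes "finite E"
  obtains R C where "linear_order_on E R" "C \<subseteq> E"
    "\<forall>e\<in>C. t < real (card (nbhd C e))"
    "\<forall>e\<in>E - C. real (back_deg E R e) \<le> t"
    "C \<noteq> {} \<Longrightarrow> \<exists>es\<in>C. (\<forall>f\<in>E. (f, es) \<in> R \<longleftrightarrow> f \<in> C) \<and>
                         (\<forall>e\<in>C. \<forall>f\<in>C. (f, e) \<in> R \<longrightarrow> card e \<le> card f)"
proof -
  obtain C ps where C: "C \<subseteq> E" "distinct ps" "set ps = E - C"
    "\<forall>e\<in>C. t < real (card (nbhd C e))"
    "\<forall>i<length ps. real (card (nbhd (C \<union> set (take i ps)) (ps!i))) \<le> t"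
    using exists_core_and_peeling_sequence[OF assms, where t = t] by blast
  obtain l where l: "set l = C" "distinct l"
    using finite_distinct_list[OF finite_subset[OF C(1) assms]] by blast
  define cs where "cs = rev (sort_key card l)"
  have cs: "set cs = C" "distinct cs" "sorted_wrt (\<lambda>f e. card e \<le> card f) cs"
    using l sorted_sort_key[of card l] unfolding cs_def
    by (simp_all add: distinct_sort sorted_wrt_rev sorted_wrt_map)
  have xs: "distinct (cs @ ps)" "set (cs @ ps) = E" using cs(1,2) C(1-3) by auto
  define R where "R = list_order (cs @ ps)"
  have lin: "linear_order_on E R" using linear_order_on_list_order[OF xs(1)] xs(2) R_def by simp
  have peeled: "real (back_deg E R e) \<le> t" if e: "e \<in> E - C" for e
  proof -
    have "e \<in> set ps" using e C(3) by simp
    then obtain i where "i < length ps" "e = ps!i" by (auto simp: in_set_conv_nth)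
    then show ?thesis using back_deg_list_order_append[OF xs] C(5) cs(1) R_def by simp
  qed
  have last_core: "\<exists>es\<in>C. (\<forall>f\<in>E. (f, es) \<in> R \<longleftrightarrow> f \<in> C) \<and>
                         (\<forall>e\<in>C. \<forall>f\<in>C. (f, e) \<in> R \<longrightarrow> card e \<le> card f)" if nonempty: "C \<noteq> {}"
  proof -
    have "cs \<noteq> []" using nonempty cs(1) by auto
    note last = list_order_append_last[OF xs(1) this cs(3)]
    show ?thesis
    proof (intro bexI[of _ "last cs"] conjI ballI)
      show "last cs \<in> C" using \<open>cs \<noteq> []\<close> cs(1) by auto
      show "(f, last cs) \<in> R \<longleftrightarrow> f \<in> C" for f using last(1) cs(1) R_def by simp
      show "(f, e) \<in> R \<longrightarrow> card e \<le> card f" if "e \<in> C" "f \<in> C" for e f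
        using last(2) that cs(1) R_def by simp
    qed
  qed
  show ?thesis using that[OF lin C(1,4)] peeled last_core by blast
qed

section \<open>Counting in linear hypergraphs\<close>

lemma hypergraph_finite:
  assumes "hypergraph V E"
  shows "finite V" "finite E"
  using assms unfolding hypergraph_def by (auto intro: finite_subset[of E "Pow V"])

lemma hypergraph_edge_subset: "hypergraph V E \<Longrightarrow> e \<in> E \<Longrightarrow> e \<subseteq> V"
  unfolding hypergraph_def by blast

lemma hypergraph_finite_edge: "hypergraph V E \<Longrightarrow> e \<in> E \<Longrightarrow> finite e"
  using hypergraph_finite(1) hypergraph_edge_subset finite_subset by metis

lemma linear_hypergraph_imp_hypergraph: "linear_hypergraph V E \<Longrightarrow> hypergraph V E"
  unfolding linear_hypergraph_def by blast

lemma linear_hypergraph_common_vertex_unique: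
  assumes "linear_hypergraph V E" "e \<in> E" "f \<in> E" "e \<noteq> f" "x \<in> e \<inter> f" "y \<in> e \<inter> f"
  shows "x = y"
proof (rule ccontr)
  assume "x \<noteq> y"
  have "finite (e \<inter> f)"
    using hypergraph_finite_edge[OF linear_hypergraph_imp_hypergraph] assms(1,2) by blast
  then have "card {x, y} \<le> card (e \<inter> f)" using assms(5,6) by (intro card_mono) auto
  moreover have "card (e \<inter> f) \<le> 1" using assms(1-4) unfolding linear_hypergraph_def by blast
  ultimately show False using \<open>x \<noteq> y\<close> by simp
qed

lemma real_card_Diff_singleton:
  assumes "finite A" "x \<in> A"
  shows "real (card (A - {x})) = real (card A) - 1"
proof -
  have "0 < card A" using assms card_gt_0_iff by blast
  then show ?thesis using assms by (simp add: of_nat_diff Suc_le_eq)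
qed

definition edges_at :: "'a set set \<Rightarrow> 'a \<Rightarrow> 'a set set" where
  "edges_at X w = {f \<in> X. w \<in> f}"

lemma finite_edges_at: "hypergraph V E \<Longrightarrow> X \<subseteq> E \<Longrightarrow> finite (edges_at X w)"
  unfolding edges_at_def using hypergraph_finite(2) finite_subset by fastforce

lemma linear_hypergraph_edges_at_disjoint:
  assumes "linear_hypergraph V E" "X \<subseteq> E"
  shows "\<forall>f\<in>edges_at X w. \<forall>g\<in>edges_at X w. f \<noteq> g \<longrightarrow> (f - {w}) \<inter> (g - {w}) = {}"
  using linear_hypergraph_common_vertex_unique[OF assms(1)] assms(2)
  unfolding edges_at_def by blast

lemma sum_edges_at_card_le:
  assumes lin: "linear_hypergraph V E" and "X \<subseteq> E" "w \<in> V"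
  shows "(\<Sum>f\<in>edges_at X w. real (card f) - 1) \<le> real (card V) - 1"
proof -
  have hyp: "hypergraph V E" using lin by (rule linear_hypergraph_imp_hypergraph)
  have fin: "finite (edges_at X w)" using finite_edges_at[OF hyp assms(2)] .
  have fin_edge: "finite f" "w \<in> f" "f \<subseteq> V" if "f \<in> edges_at X w" for f
    using that assms(2) hypergraph_finite_edge[OF hyp] hypergraph_edge_subset[OF hyp]
    unfolding edges_at_def by auto
  have "(\<Sum>f\<in>edges_at X w. real (card f) - 1) = (\<Sum>f\<in>edges_at X w. real (card (f - {w})))"
    using fin_edge by (intro sum.cong refl) (metis real_card_Diff_singleton)
  also have "\<dots> = real (card (\<Union>f\<in>edges_at X w. f - {w}))"
    using card_UN_disjoint[OF fin _ linear_hypergraph_edges_at_disjoint[OF lin assms(2)]] fin_edge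
    by (simp add: of_nat_sum)
  also have "\<dots> \<le> real (card (V - {w}))"
    using fin_edge hypergraph_finite(1)[OF hyp] by (intro of_nat_mono card_mono) auto
  also have "\<dots> = real (card V) - 1"
    using hypergraph_finite(1)[OF hyp] assms(3) by (rule real_card_Diff_singleton)
  finally show ?thesis .
qed

lemma card_nbhd_eq_sum_degrees:
  assumes lin: "linear_hypergraph V E" and "X \<subseteq> E" "e \<in> X"
  shows "real (card (nbhd X e)) = (\<Sum>w\<in>e. real (card (edges_at X w)) - 1)"
proof -
  have hyp: "hypergraph V E" using lin by (rule linear_hypergraph_imp_hypergraph)
  have fin: "finite e" using assms(2,3) hypergraph_finite_edge[OF hyp] by blast
  have eq: "nbhd X e = (\<Union>w\<in>e. edges_at X w - {e})"
    unfolding nbhd_def edges_at_def by auto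
  have disj: "\<forall>w\<in>e. \<forall>w'\<in>e. w \<noteq> w' \<longrightarrow> (edges_at X w - {e}) \<inter> (edges_at X w' - {e}) = {}"
    using linear_hypergraph_common_vertex_unique[OF lin] assms(2,3) unfolding edges_at_def by blast
  have "card (nbhd X e) = (\<Sum>w\<in>e. card (edges_at X w - {e}))"
    unfolding eq using finite_edges_at[OF hyp assms(2)] disj by (intro card_UN_disjoint[OF fin]) auto
  moreover have "real (card (edges_at X w - {e})) = real (card (edges_at X w)) - 1" if "w \<in> e" for w
    using that assms(3) finite_edges_at[OF hyp assms(2)]
    by (intro real_card_Diff_singleton) (auto simp: edges_at_def)
  ultimately show ?thesis by (simp add: of_nat_sum)
qed

lemma sum_card_mult_eq_sum_edges_at:
  assumes hyp: "hypergraph V E" and "X \<subseteq> E"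
  shows "(\<Sum>f\<in>X. real (card f) * h f) = (\<Sum>w\<in>V. \<Sum>f\<in>edges_at X w. h f)"
proof -
  have "(\<Sum>f\<in>X. real (card f) * h f) = (\<Sum>f\<in>X. \<Sum>w\<in>{w\<in>V. w \<in> f}. h f)"
  proof (rule sum.cong)
    fix f assume "f \<in> X"
    then have "{w\<in>V. w \<in> f} = f" using hypergraph_edge_subset[OF hyp] assms(2) by blast
    then show "real (card f) * h f = (\<Sum>w\<in>{w\<in>V. w \<in> f}. h f)" by simp
  qed simp
  also have "\<dots> = (\<Sum>w\<in>V. \<Sum>f\<in>edges_at X w. h f)"
    unfolding edges_at_def using hypergraph_finite[OF hyp] assms(2)
    by (intro sum.swap_restrict) (auto intro: finite_subset)
  finally show ?thesis .
qed

lemma edges_at_short_edges_bound: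
  fixes \<delta> :: real
  assumes lin: "linear_hypergraph V E" and "X \<subseteq> E" "w \<in> V" "0 \<le> \<delta>"
    and min_size: "\<forall>f\<in>X. k \<le> card f"
  defines "W \<equiv> {f\<in>X. real (card f) \<le> (1 + \<delta>) * real k}"
  shows "(1 + \<delta>) * (real k - 1) * real (card (edges_at X w)) - (real (card V) - 1)
           \<le> \<delta> * (\<Sum>f\<in>edges_at W w. real (card f) - 1)"
proof -
  define A where "A = edges_at W w"
  define B where "B = edges_at X w - A"
  define SA where "SA = (\<Sum>f\<in>A. real (card f) - 1)"
  define SB where "SB = (\<Sum>f\<in>B. real (card f) - 1)"
  have "finite (edges_at X w)"
    using finite_edges_at[OF linear_hypergraph_imp_hypergraph[OF lin] assms(2)] .
  moreover have "A \<subseteq> edges_at X w" unfolding A_def W_def edges_at_def by auto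
  ultimately have split: "edges_at X w = A \<union> B" "A \<inter> B = {}" "finite A" "finite B"
    unfolding B_def by (auto intro: finite_subset)
  have "SA + SB \<le> real (card V) - 1"
    using sum_edges_at_card_le[OF lin assms(2,3)]
      sum.union_disjoint[OF split(3,4,2), of "\<lambda>f. real (card f) - 1"]
    unfolding SA_def SB_def split(1) by simp
  moreover have "real (card A) * (real k - 1) \<le> SA"
    unfolding SA_def using min_size
    by (intro sum_bounded_below) (auto simp: A_def W_def edges_at_def)
  then have "(1 + \<delta>) * (real (card A) * (real k - 1)) \<le> (1 + \<delta>) * SA"
    using assms(4) by (intro mult_left_mono) auto
  moreover have "real (card B) * ((1 + \<delta>) * (real k - 1)) \<le> SB"
    unfolding SB_def using assms(4)
    by (intro sum_bounded_below) (auto simp: A_def B_def W_def edges_at_def algebra_simps)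
  moreover have "real (card (edges_at X w)) = real (card A) + real (card B)"
    using card_Un_disjoint[OF split(3,4,2)] split(1) by simp
  ultimately show ?thesis unfolding A_def[symmetric] SA_def[symmetric]
    by (simp add: algebra_simps)
qed

lemma short_edges_weight_bound:
  fixes \<delta> :: real
  assumes lin: "linear_hypergraph V E" and "X \<subseteq> E" "0 \<le> \<delta>"
    and min_size: "\<forall>f\<in>X. k \<le> card f"
  defines "W \<equiv> {f\<in>X. real (card f) \<le> (1 + \<delta>) * real k}"
  shows "(1 + \<delta>) * (real k - 1) * (\<Sum>w\<in>V. real (card (edges_at X w))) - real (card V) * (real (card V) - 1)
           \<le> \<delta> * (\<Sum>f\<in>W. real (card f) * (real (card f) - 1))"
proof -
  have hyp: "hypergraph V E" using lin by (rule linear_hypergraph_imp_hypergraph)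
  have "W \<subseteq> E" using assms(2) unfolding W_def by auto
  have "(1 + \<delta>) * (real k - 1) * (\<Sum>w\<in>V. real (card (edges_at X w))) - real (card V) * (real (card V) - 1)
      = (\<Sum>w\<in>V. (1 + \<delta>) * (real k - 1) * real (card (edges_at X w)) - (real (card V) - 1))"
    by (simp add: sum_subtractf sum_distrib_left)
  also have "\<dots> \<le> (\<Sum>w\<in>V. \<delta> * (\<Sum>f\<in>edges_at W w. real (card f) - 1))"
    using edges_at_short_edges_bound[OF lin assms(2) _ assms(3) min_size] unfolding W_def
    by (intro sum_mono) blast
  also have "\<dots> = \<delta> * (\<Sum>f\<in>W. real (card f) * (real (card f) - 1))"
    using sum_card_mult_eq_sum_edges_at[OF hyp \<open>W \<subseteq> E\<close>] by (simp add: sum_distrib_left)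
  finally show ?thesis .
qed

section \<open>Degree sums in a dense core\<close>

lemma exists_vertex_of_large_degree:
  assumes lin: "linear_hypergraph V E" and "X \<subseteq> E" "e \<in> X"
    and "t < real (card (nbhd X e))"
  shows "\<exists>u\<in>e. t / real (card e) < real (card (edges_at X u)) - 1"
proof (rule ccontr)
  assume "\<not> ?thesis"
  have hyp: "hypergraph V E" using lin by (rule linear_hypergraph_imp_hypergraph)
  have "0 < card e"
    using assms(2,3) hyp hypergraph_finite_edge[OF hyp] unfolding hypergraph_def
    by (auto simp: card_gt_0_iff)
  from \<open>\<not> ?thesis\<close> have "(\<Sum>w\<in>e. real (card (edges_at X w)) - 1) \<le> (\<Sum>w\<in>e. t / real (card e))"
    by (intro sum_mono) auto
  also have "\<dots> = t" using \<open>0 < card e\<close> by simp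
  finally show False using card_nbhd_eq_sum_degrees[OF lin assms(2,3)] assms(4) by simp
qed

text \<open>Each edge through \<open>u\<close> has more than \<open>t\<close> neighbours, at most \<open>d - 1\<close> of them
  at \<open>u\<close>; the rest are counted at its other vertices, which are distinct for distinct
  edges through \<open>u\<close>.\<close>
lemma degree_sum_ge_star_neighbourhoods:
  assumes lin: "linear_hypergraph V E" and "X \<subseteq> E"
    and dense: "\<forall>f\<in>edges_at X u. t < real (card (nbhd X f))"
  defines "d \<equiv> real (card (edges_at X u))"
  shows "d * (t - (d - 1)) \<le> (\<Sum>w\<in>V. real (card (edges_at X w)))"
proof -
  have hyp: "hypergraph V E" using lin by (rule linear_hypergraph_imp_hypergraph)
  have fin: "finite (edges_at X u)" using finite_edges_at[OF hyp assms(2)] .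
  have edge: "f \<in> X" "u \<in> f" "finite f" "f \<subseteq> V" if "f \<in> edges_at X u" for f
    using that assms(2) hypergraph_finite_edge[OF hyp] hypergraph_edge_subset[OF hyp]
    unfolding edges_at_def by auto
  have "t - (d - 1) \<le> (\<Sum>w\<in>f - {u}. real (card (edges_at X w)))" if "f \<in> edges_at X u" for f
  proof -
    have "t < real (card (nbhd X f))" using dense that by blast
    also have "\<dots> = (\<Sum>w\<in>f. real (card (edges_at X w)) - 1)"
      by (rule card_nbhd_eq_sum_degrees[OF lin assms(2) edge(1)[OF that]])
    also have "\<dots> = (d - 1) + (\<Sum>w\<in>f - {u}. real (card (edges_at X w)) - 1)"
      using sum.remove[OF edge(3,2)[OF that]] unfolding d_def by simp
    also have "\<dots> \<le> (d - 1) + (\<Sum>w\<in>f - {u}. real (card (edges_at X w)))"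
      by (intro add_left_mono sum_mono) simp
    finally show ?thesis by simp
  qed
  then have "d * (t - (d - 1)) \<le> (\<Sum>f\<in>edges_at X u. \<Sum>w\<in>f - {u}. real (card (edges_at X w)))"
    unfolding d_def by (intro sum_bounded_below) simp
  also have "\<dots> = (\<Sum>w\<in>(\<Union>f\<in>edges_at X u. f - {u}). real (card (edges_at X w)))"
    using edge(3) linear_hypergraph_edges_at_disjoint[OF lin assms(2)]
    by (intro sum.UNION_disjoint[OF fin, symmetric]) auto
  also have "\<dots> \<le> (\<Sum>w\<in>V. real (card (edges_at X w)))"
    using edge(4) hypergraph_finite(1)[OF hyp] by (intro sum_mono2) auto
  finally show ?thesis .
qed

lemma degree_mult_min_size_le:
  assumes lin: "linear_hypergraph V E" and "X \<subseteq> E" "u \<in> V"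
    and min_size: "\<forall>f\<in>X. k \<le> card f"
  shows "real (card (edges_at X u)) * (real k - 1) \<le> real (card V) - 1"
proof -
  have "real (card (edges_at X u)) * (real k - 1) \<le> (\<Sum>f\<in>edges_at X u. real (card f) - 1)"
    using min_size by (intro sum_bounded_below) (auto simp: edges_at_def)
  also have "\<dots> \<le> real (card V) - 1" by (rule sum_edges_at_card_le[OF lin assms(2,3)])
  finally show ?thesis .
qed

text \<open>A vertex \<open>u\<close> of the smallest edge has degree \<open>d > t/k\<close>; the stars of the other vertices
  of edges through \<open>u\<close> carry \<open>d (t - (d - 1))\<close> incidences, while linearity gives
  \<open>d (k - 1) \<le> n - 1\<close>.\<close>
lemma core_degree_sum_bound:
  fixes t :: real
  assumes lin: "linear_hypergraph V E" and "X \<subseteq> E" "e \<in> X"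
    and min_size: "\<forall>f\<in>X. card e \<le> card f"
    and core: "\<forall>f\<in>X. t < real (card (nbhd X f))"
    and "0 \<le> t" "real (card V) - 1 \<le> (real (card e) - 1) * t"
  shows "t / real (card e) * ((real (card e) - 1) * t - (real (card V) - 1))
           \<le> (real (card e) - 1) * (\<Sum>w\<in>V. real (card (edges_at X w)))"
proof -
  define n k S where "n = real (card V)" and "k = real (card e)"
    and "S = (\<Sum>w\<in>V. real (card (edges_at X w)))"
  have hyp: "hypergraph V E" using lin by (rule linear_hypergraph_imp_hypergraph)
  obtain u where u: "u \<in> e" "t / k < real (card (edges_at X u)) - 1"
    using exists_vertex_of_large_degree[OF lin assms(2,3)] core assms(3)
    unfolding k_def by blast
  define d where "d = real (card (edges_at X u))"
  have "u \<in> V" using u(1) assms(2,3) hypergraph_edge_subset[OF hyp] by blast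
  have star: "d * (t - (d - 1)) \<le> S"
    using degree_sum_ge_star_neighbourhoods[OF lin assms(2)] core
    unfolding d_def S_def by (simp add: edges_at_def)
  have deg: "d * (k - 1) \<le> n - 1"
    using degree_mult_min_size_le[OF lin assms(2) \<open>u \<in> V\<close> min_size] unfolding d_def k_def n_def .
  have "e \<noteq> {}" "finite e"
    using assms(2,3) hyp hypergraph_finite_edge[OF hyp] unfolding hypergraph_def by auto
  then have "k \<ge> 1" unfolding k_def by (simp add: Suc_le_eq card_gt_0_iff)
  have "t / k \<ge> 0" using assms(6) \<open>k \<ge> 1\<close> by simp
  have "(k - 1) * (d * (t - (d - 1))) \<le> (k - 1) * S"
    using star \<open>k \<ge> 1\<close> by (intro mult_left_mono) auto
  moreover have "d * ((k - 1) * (d - 1)) \<le> d * (n - 1)"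
    using deg u(2) \<open>t / k \<ge> 0\<close> \<open>k \<ge> 1\<close> unfolding d_def
    by (intro mult_left_mono) (auto simp: algebra_simps)
  moreover have "t / k * ((k - 1) * t - (n - 1)) \<le> d * ((k - 1) * t - (n - 1))"
    using u(2) assms(7) unfolding d_def k_def n_def by (intro mult_right_mono) auto
  ultimately show ?thesis unfolding n_def k_def S_def by (simp add: algebra_simps)
qed

lemma two_le_card_if_threshold:
  fixes \<tau> :: real
  assumes "\<tau> < 1" "1 \<le> (real m - 1) * (1 - \<tau>)"
  shows "2 \<le> m"
proof -
  have "real m - 1 > 0" using assms by (smt (verit) mult_nonpos_nonneg)
  then show ?thesis by simp
qed

lemma core_degree_sum_lower_bound:
  fixes \<tau> :: real
  assumes lin: "linear_hypergraph V E" and "X \<subseteq> E" "e \<in> X"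
    and min_size: "\<forall>f\<in>X. card e \<le> card f"
    and core: "\<forall>f\<in>X. (1 - \<tau>) * real (card V) < real (card (nbhd X f))"
    and "0 \<le> \<tau>" "\<tau> < 1" and large: "1 \<le> (real (card e) - 1) * (1 - \<tau>)"
  shows "real (card V) * (real (card V) - 1) * ((1 - \<tau>)\<^sup>2 - 2 / real (card e))
           \<le> (real (card e) - 1) * (\<Sum>w\<in>V. real (card (edges_at X w)))"
proof -
  define n k where "n = real (card V)" and "k = real (card e)"
  define Q where "Q = (k - 1) * (1 - \<tau>) - 1"
  have hyp: "hypergraph V E" using lin by (rule linear_hypergraph_imp_hypergraph)
  have "k \<ge> 2" using two_le_card_if_threshold[OF assms(7) large] unfolding k_def by simp
  have "e \<subseteq> V" using assms(2,3) hypergraph_edge_subset[OF hyp] by blast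
  then have "k \<le> n" unfolding k_def n_def by (simp add: card_mono hypergraph_finite(1)[OF hyp])
  have "Q \<ge> 0" using large unfolding Q_def k_def by simp
  have t_nonneg: "0 \<le> (1 - \<tau>) * real (card V)" using assms(7) by simp
  have t_large: "real (card V) - 1 \<le> (real (card e) - 1) * ((1 - \<tau>) * real (card V))"
    using mult_right_mono[OF large, of "real (card V)"] by (simp add: algebra_simps)
  note bound = core_degree_sum_bound[OF lin assms(2,3) min_size core t_nonneg t_large]
  have "(1 - \<tau>) * n / k * (n * Q) \<le> (1 - \<tau>) * n / k * ((k - 1) * ((1 - \<tau>) * n) - (n - 1))"
    using assms(7) \<open>k \<ge> 2\<close> \<open>k \<le> n\<close> unfolding Q_def by (intro mult_left_mono) (auto simp: algebra_simps)
  also have "\<dots> \<le> (k - 1) * (\<Sum>w\<in>V. real (card (edges_at X w)))"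
    using bound unfolding n_def k_def .
  finally have "n * n * ((1 - \<tau>) * Q / k) \<le> (k - 1) * (\<Sum>w\<in>V. real (card (edges_at X w)))"
    by (simp add: algebra_simps)
  moreover have "(1 - \<tau>) * Q / k = (1 - \<tau>)\<^sup>2 - ((1 - \<tau>)\<^sup>2 + (1 - \<tau>)) / k"
    using \<open>k \<ge> 2\<close> unfolding Q_def by (simp add: field_simps power2_eq_square)
  moreover have "(1 - \<tau>)\<^sup>2 \<le> 1" using assms(6,7) by (intro power_le_one) auto
  then have "(1 - \<tau>)\<^sup>2 - 2 / k \<le> (1 - \<tau>)\<^sup>2 - ((1 - \<tau>)\<^sup>2 + (1 - \<tau>)) / k"
    using assms(6) \<open>k \<ge> 2\<close> by (simp add: divide_right_mono)
  moreover have "n * (n - 1) * ((1 - \<tau>) * Q / k) \<le> n * n * ((1 - \<tau>) * Q / k)"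
    using \<open>Q \<ge> 0\<close> \<open>k \<le> n\<close> \<open>k \<ge> 2\<close> assms(7) by (intro mult_right_mono) auto
  ultimately have "n * (n - 1) * ((1 - \<tau>)\<^sup>2 - 2 / k) \<le> (k - 1) * (\<Sum>w\<in>V. real (card (edges_at X w)))"
    using \<open>k \<le> n\<close> \<open>k \<ge> 2\<close> by (smt (verit) mult_left_mono mult_nonneg_nonneg)
  then show ?thesis unfolding n_def k_def .
qed

lemma real_choose_two: "real (n choose 2) = real n * (real n - 1) / 2"
proof (induction n)
  case (Suc n)
  have "Suc n choose 2 = n + (n choose 2)" by (simp add: numeral_2_eq_2)
  then show ?case using Suc by (simp add: field_simps)
qed simp

lemma short_edges_volume_bound:
  fixes \<tau> \<delta> c :: real
  assumes lin: "linear_hypergraph V E" and "X \<subseteq> E" "e \<in> X"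
    and min_size: "\<forall>f\<in>X. card e \<le> card f"
    and core: "\<forall>f\<in>X. (1 - \<tau>) * real (card V) < real (card (nbhd X f))"
    and "0 \<le> \<tau>" "\<tau> < 1" "0 < \<delta>"
    and large: "1 \<le> (real (card e) - 1) * (1 - \<tau>)"
    and gap: "(1 + \<delta>)\<^sup>2 * (2 / real (card e)) \<le> (1 + \<delta>)\<^sup>2 * (1 - \<tau>)\<^sup>2 - (1 + \<delta>) - \<delta> * c"
  defines "W \<equiv> {f\<in>X. real (card f) \<le> (1 + \<delta>) * real (card e)}"
  shows "c / (1 + \<delta>) \<le> vol (card V) W"
proof -
  define n k S T where "n = real (card V)" and "k = real (card e)"
    and "S = (\<Sum>w\<in>V. real (card (edges_at X w)))"
    and "T = (\<Sum>f\<in>W. real (card f) * (real (card f) - 1))"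
  define N \<epsilon> where "N = n * (n - 1)" and "\<epsilon> = 2 / k"
  have hyp: "hypergraph V E" using lin by (rule linear_hypergraph_imp_hypergraph)
  have degrees: "N * ((1 - \<tau>)\<^sup>2 - \<epsilon>) \<le> (k - 1) * S"
    using core_degree_sum_lower_bound[OF lin assms(2,3) min_size core assms(6,7) large]
    unfolding N_def \<epsilon>_def n_def k_def S_def .
  have weight: "(1 + \<delta>) * (k - 1) * S - N \<le> \<delta> * T"
    using short_edges_weight_bound[OF lin assms(2) _ min_size, of \<delta>] assms(8)
    unfolding N_def n_def k_def S_def T_def W_def by simp
  have "2 \<le> card e" using two_le_card_if_threshold[OF assms(7) large] .
  moreover have "card e \<le> card V"
    using assms(2,3) hypergraph_edge_subset[OF hyp] hypergraph_finite(1)[OF hyp] by (meson card_mono subsetD)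
  ultimately have "N > 0" unfolding N_def n_def by simp
  have "(1 + \<delta>) * (N * ((1 - \<tau>)\<^sup>2 - \<epsilon>)) \<le> (1 + \<delta>) * ((k - 1) * S)"
    using degrees assms(8) by (intro mult_left_mono) auto
  then have "N * ((1 + \<delta>) * ((1 - \<tau>)\<^sup>2 - \<epsilon>) - 1) \<le> \<delta> * T"
    using weight by (simp add: algebra_simps)
  then have "(1 + \<delta>) * (N * ((1 + \<delta>) * ((1 - \<tau>)\<^sup>2 - \<epsilon>) - 1)) \<le> (1 + \<delta>) * (\<delta> * T)"
    using assms(8) by (intro mult_left_mono) auto
  moreover have "N * (\<delta> * c) \<le> (1 + \<delta>) * (N * ((1 + \<delta>) * ((1 - \<tau>)\<^sup>2 - \<epsilon>) - 1))"
    using mult_left_mono[OF gap[folded k_def, folded \<epsilon>_def], of N] \<open>N > 0\<close>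
    by (simp add: algebra_simps power2_eq_square)
  ultimately have "\<delta> * (N * c) \<le> \<delta> * ((1 + \<delta>) * T)" by (simp add: algebra_simps)
  then have "N * c \<le> (1 + \<delta>) * T" using assms(8) by simp
  moreover have "(\<Sum>f\<in>W. real (card f choose 2)) = T / 2"
    unfolding T_def real_choose_two by (simp add: sum_divide_distrib)
  then have "vol (card V) W = T / N"
    unfolding vol_def real_choose_two N_def n_def by simp
  ultimately show ?thesis using \<open>N > 0\<close> assms(8) by (simp add: divide_le_eq le_divide_eq mult.commute)
qed

lemma short_edges_Max_le_Min:
  fixes \<delta> :: real
  assumes "finite C" "e \<in> C" "\<forall>f\<in>C. card e \<le> card f" "0 \<le> \<delta>"
  defines "W \<equiv> {f\<in>C. real (card f) \<le> (1 + \<delta>) * real (card e)}"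
  shows "e \<in> W" "real (Max (card ` W)) \<le> (1 + \<delta>) * real (Min (card ` W))"
proof -
  show "e \<in> W" using assms(2,4) unfolding W_def by (simp add: algebra_simps)
  have "finite W" using assms(1) unfolding W_def by simp
  then have "Min (card ` W) = card e"
    using \<open>e \<in> W\<close> assms(3) unfolding W_def by (intro Min_eqI) auto
  moreover have "Max (card ` W) \<in> card ` W" using \<open>finite W\<close> \<open>e \<in> W\<close> by (intro Max_in) auto
  ultimately show "real (Max (card ` W)) \<le> (1 + \<delta>) * real (Min (card ` W))"
    unfolding W_def by auto
qed

lemma parameter_gap_dominant_terms:
  fixes \<sigma> K :: real
  assumes "0 < \<sigma>" "\<sigma> < 1" "1 \<le> K" "0 < 1 - \<sigma>^4 - 7 * \<sigma> / K"
  defines "p \<equiv> 1 - \<sigma>^4" and "\<delta> \<equiv> 3 * \<sigma> * K^4" and "b \<equiv> 7 * \<sigma> / K"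
  shows "2 * \<sigma>^4 < \<delta> * p\<^sup>2" and "2 * \<sigma>^4 < \<delta> * (b * (2 * p - b))"
proof -
  have "K > 0" "b > 0" "\<delta> > 0" "p > b"
    using assms unfolding b_def \<delta>_def p_def by auto
  have "7 * \<sigma> < K * p" using \<open>p > b\<close> \<open>K > 0\<close> unfolding b_def by (simp add: field_simps)
  then have "0 < K * p" using assms(1) by linarith
  have "K\<^sup>2 \<ge> 1" using assms(3) by (simp add: one_le_power)
  have "\<sigma>^4 \<le> \<sigma>^3" using assms(1,2) by (intro power_decreasing) auto
  moreover have "0 \<le> \<sigma>^3" using assms(1) by simp
  ultimately have small: "2 * \<sigma>^4 \<le> 147 * \<sigma>^3" by linarith
  have "(7 * \<sigma>)\<^sup>2 < (K * p)\<^sup>2"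
    using \<open>7 * \<sigma> < K * p\<close> assms(1) by (intro power_strict_mono) auto
  also have "\<dots> \<le> K\<^sup>2 * (K * p)\<^sup>2" using \<open>K\<^sup>2 \<ge> 1\<close> by (simp add: mult_le_cancel_right1)
  finally have "3 * \<sigma> * (7 * \<sigma>)\<^sup>2 < 3 * \<sigma> * (K\<^sup>2 * (K * p)\<^sup>2)"
    using assms(1) by simp
  then have "147 * \<sigma>^3 < 3 * \<sigma> * (K\<^sup>2 * (K * p)\<^sup>2)"
    by (simp add: power2_eq_square power3_eq_cube)
  also have "\<dots> = \<delta> * p\<^sup>2" unfolding \<delta>_def by (simp add: power_mult_distrib power2_eq_square power4_eq_xxxx)
  finally show "2 * \<sigma>^4 < \<delta> * p\<^sup>2" using small by linarith
  have "7 * \<sigma> < K\<^sup>2 * (K * p)"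
    using \<open>7 * \<sigma> < K * p\<close> \<open>K\<^sup>2 \<ge> 1\<close> \<open>0 < K * p\<close> by (smt (verit) mult_le_cancel_right1)
  then have "21 * \<sigma>\<^sup>2 * (7 * \<sigma>) < 21 * \<sigma>\<^sup>2 * (K\<^sup>2 * (K * p))"
    using assms(1) by (intro mult_strict_left_mono) auto
  then have "147 * \<sigma>^3 < 21 * \<sigma>\<^sup>2 * (K\<^sup>2 * (K * p))"
    by (simp add: power2_eq_square power3_eq_cube)
  also have "\<dots> = \<delta> * (b * p)" unfolding \<delta>_def b_def using \<open>K > 0\<close>
    by (simp add: power2_eq_square power4_eq_xxxx field_simps)
  also have "\<dots> \<le> \<delta> * (b * (2 * p - b))"
    using \<open>b > 0\<close> \<open>p > b\<close> \<open>\<delta> > 0\<close> by (intro mult_left_mono) auto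
  finally show "2 * \<sigma>^4 < \<delta> * (b * (2 * p - b))" using small by linarith
qed

text \<open>With \<open>\<sigma> = \<tau>^(1/4)\<close>, \<open>\<delta> = 3\<sigma>K^4\<close> and \<open>c = (1 - \<tau> - 7\<sigma>/K)^2\<close>, the gap below is what
  remains of the volume inequality once the \<open>O(1/k)\<close> error terms are dropped.\<close>
lemma parameter_gap_pos:
  fixes \<sigma> K :: real
  assumes "0 < \<sigma>" "\<sigma> < 1" "1 \<le> K" "0 < 1 - \<sigma>^4 - 7 * \<sigma> / K"
  defines "p \<equiv> 1 - \<sigma>^4" and "\<delta> \<equiv> 3 * \<sigma> * K^4" and "b \<equiv> 7 * \<sigma> / K"
  shows "0 < (1 + \<delta>)\<^sup>2 * p\<^sup>2 - (1 + \<delta>) - \<delta> * (p - b)\<^sup>2"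
proof -
  note dominant = parameter_gap_dominant_terms[OF assms(1-4), folded p_def \<delta>_def b_def]
  have "0 < \<delta>" using assms(1,3) unfolding \<delta>_def by simp
  have "\<delta> * (2 * \<sigma>^4) \<le> \<delta> * (\<delta> * p\<^sup>2)"
    using dominant(1) \<open>0 < \<delta>\<close> by simp
  moreover have "(1 - p\<^sup>2) * (1 + \<delta>) \<le> 2 * \<sigma>^4 * (1 + \<delta>)"
    using \<open>0 < \<delta>\<close> unfolding p_def by (intro mult_right_mono) (simp_all add: algebra_simps power2_eq_square)
  moreover have "(1 + \<delta>)\<^sup>2 * p\<^sup>2 - (1 + \<delta>) - \<delta> * (p - b)\<^sup>2
      = \<delta> * (\<delta> * p\<^sup>2) + \<delta> * (b * (2 * p - b)) - (1 - p\<^sup>2) * (1 + \<delta>)"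
    by (simp add: algebra_simps power2_eq_square)
  ultimately show ?thesis using dominant(2) by (simp add: algebra_simps)
qed

lemma edge_size_thresholds:
  fixes \<tau> \<delta> g k :: real
  assumes "\<tau> < 1" "0 < g" "1 + 1 / (1 - \<tau>) + 2 * (1 + \<delta>)\<^sup>2 / g \<le> k"
  shows "1 \<le> (k - 1) * (1 - \<tau>)" "(1 + \<delta>)\<^sup>2 * (2 / k) \<le> g"
proof -
  have "0 \<le> 2 * (1 + \<delta>)\<^sup>2 / g" "0 < 1 / (1 - \<tau>)" using assms(1,2) by simp_all
  then have "1 / (1 - \<tau>) \<le> k - 1" "2 * (1 + \<delta>)\<^sup>2 / g < k"
    using assms(3) by linarith+
  show "1 \<le> (k - 1) * (1 - \<tau>)"
    using \<open>1 / (1 - \<tau>) \<le> k - 1\<close> assms(1) by (simp add: divide_le_eq mult.commute)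
  have "0 < k" using \<open>2 * (1 + \<delta>)\<^sup>2 / g < k\<close> \<open>0 \<le> 2 * (1 + \<delta>)\<^sup>2 / g\<close> by linarith
  have "2 * (1 + \<delta>)\<^sup>2 < g * k"
    using \<open>2 * (1 + \<delta>)\<^sup>2 / g < k\<close> assms(2) by (simp add: divide_less_eq mult.commute)
  then show "(1 + \<delta>)\<^sup>2 * (2 / k) \<le> g" using \<open>0 < k\<close> by (simp add: field_simps)
qed

lemma last_core_edge_properties:
  assumes R: "linear_order_on E R" and "C \<subseteq> E" "es \<in> C"
    and below: "\<forall>f\<in>E. (f, es) \<in> R \<longleftrightarrow> f \<in> C"
    and sorted: "\<forall>e\<in>C. \<forall>f\<in>C. (f, e) \<in> R \<longrightarrow> card e \<le> card f"
  shows "\<forall>f\<in>C. card es \<le> card f"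
    and "\<forall>f\<in>E. (es, f) \<in> R \<and> f \<noteq> es \<longrightarrow> f \<in> E - C"
    and "\<forall>e\<in>E. \<forall>f\<in>E. (f, e) \<in> R \<and> (e, es) \<in> R \<longrightarrow> card e \<le> card f"
proof -
  have "antisym R" "trans R"
    using R unfolding linear_order_on_def partial_order_on_def preorder_on_def by auto
  show "\<forall>f\<in>C. card es \<le> card f" using below sorted assms(2,3) by blast
  show "\<forall>f\<in>E. (es, f) \<in> R \<and> f \<noteq> es \<longrightarrow> f \<in> E - C"
    using below \<open>antisym R\<close> by (auto dest: antisymD)
  show "\<forall>e\<in>E. \<forall>f\<in>E. (f, e) \<in> R \<and> (e, es) \<in> R \<longrightarrow> card e \<le> card f"
    using below sorted \<open>trans R\<close> by (blast dest: transD)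
qed

lemma linear_hypergraph_order_dichotomy:
  fixes \<tau> \<delta> c :: real
  assumes lin: "linear_hypergraph V E" and "0 \<le> \<tau>" "\<tau> < 1" "0 < \<delta>"
    and large: "\<forall>e\<in>E. 1 \<le> (real (card e) - 1) * (1 - \<tau>)"
    and gap: "\<forall>e\<in>E. (1 + \<delta>)\<^sup>2 * (2 / real (card e)) \<le> (1 + \<delta>)\<^sup>2 * (1 - \<tau>)\<^sup>2 - (1 + \<delta>) - \<delta> * c"
  shows "\<exists>R. linear_order_on E R \<and>
    ((\<forall>e\<in>E. real (back_deg E R e) \<le> (1 - \<tau>) * real (card V)) \<or>
     (\<exists>W. W \<subseteq> E \<and> W \<noteq> {} \<and>
        real (Max (card ` W)) \<le> (1 + \<delta>) * real (Min (card ` W)) \<and>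
        vol (card V) W \<ge> c / (1 + \<delta>) \<and>
        (\<exists>estar\<in>W. (\<forall>w\<in>W. (w, estar) \<in> R) \<and>
          (\<forall>f\<in>E. (estar, f) \<in> R \<and> f \<noteq> estar \<longrightarrow>
              real (back_deg E R f) \<le> (1 - \<tau>) * real (card V)) \<and>
          (\<forall>e\<in>E. \<forall>f\<in>E. (f, e) \<in> R \<and> (e, estar) \<in> R \<longrightarrow> card f \<ge> card e))))"
proof -
  define t where "t = (1 - \<tau>) * real (card V)"
  have hyp: "hypergraph V E" using lin by (rule linear_hypergraph_imp_hypergraph)
  obtain R C where R: "linear_order_on E R" and "C \<subseteq> E"
    and core: "\<forall>e\<in>C. t < real (card (nbhd C e))"
    and peeled: "\<forall>e\<in>E - C. real (back_deg E R e) \<le> t"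
    and last: "C \<noteq> {} \<Longrightarrow> \<exists>es\<in>C. (\<forall>f\<in>E. (f, es) \<in> R \<longleftrightarrow> f \<in> C) \<and>
                         (\<forall>e\<in>C. \<forall>f\<in>C. (f, e) \<in> R \<longrightarrow> card e \<le> card f)"
    using exists_order_with_core_first[OF hypergraph_finite(2)[OF hyp], where t = t] by blast
  show ?thesis
  proof (cases "C = {}")
    case True
    then show ?thesis using R peeled unfolding t_def by auto
  next
    case False
    then obtain es where "es \<in> C" and below: "\<forall>f\<in>E. (f, es) \<in> R \<longleftrightarrow> f \<in> C"
      and sorted: "\<forall>e\<in>C. \<forall>f\<in>C. (f, e) \<in> R \<longrightarrow> card e \<le> card f"
      using last by blast
    define W where "W = {f\<in>C. real (card f) \<le> (1 + \<delta>) * real (card es)}"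
    have "es \<in> E" using \<open>es \<in> C\<close> \<open>C \<subseteq> E\<close> by blast
    note es = last_core_edge_properties[OF R \<open>C \<subseteq> E\<close> \<open>es \<in> C\<close> below sorted]
    have "finite C" using \<open>C \<subseteq> E\<close> hypergraph_finite(2)[OF hyp] finite_subset by blast
    note W = short_edges_Max_le_Min[OF this \<open>es \<in> C\<close> es(1) less_imp_le[OF assms(4)], folded W_def]
    have "W \<subseteq> C" unfolding W_def by blast
    have vol: "c / (1 + \<delta>) \<le> vol (card V) W"
      using short_edges_volume_bound[OF lin \<open>C \<subseteq> E\<close> \<open>es \<in> C\<close> es(1) core[unfolded t_def]
          assms(2-4)] large gap \<open>es \<in> E\<close>
      unfolding W_def by blast
    have "\<forall>w\<in>W. (w, es) \<in> R" using below \<open>W \<subseteq> C\<close> \<open>C \<subseteq> E\<close> by blast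
    then show ?thesis
      using R W vol es(2,3) peeled \<open>W \<subseteq> C\<close> \<open>C \<subseteq> E\<close> unfolding t_def
      by (intro exI[of _ R] conjI disjI2 exI[of _ W] bexI[of _ es]) auto
  qed
qed

theorem lemma6p2:
  fixes \<tau> K :: real
  assumes "0 < \<tau>" "\<tau> < 1" "K \<ge> 1" "1 - \<tau> - 7 * \<tau> powr (1/4) / K > 0"
  shows "\<exists>r0::nat. \<forall>r1::nat. r1 \<ge> r0 \<longrightarrow>
    (\<forall>(V::'a set) E. linear_hypergraph V E \<longrightarrow> (\<forall>e\<in>E. card e \<ge> r1) \<longrightarrow>
      (\<exists>R. linear_order_on E R \<and>
        ((\<forall>e\<in>E. real (back_deg E R e) \<le> (1 - \<tau>) * real (card V)) \<or>
         (\<exists>W. W \<subseteq> E \<and> W \<noteq> {} \<and>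
            real (Max (card ` W)) \<le> (1 + 3 * \<tau> powr (1/4) * K ^ 4) * real (Min (card ` W)) \<and>
            vol (card V) W \<ge> (1 - \<tau> - 7 * \<tau> powr (1/4) / K)\<^sup>2 / (1 + 3 * \<tau> powr (1/4) * K ^ 4) \<and>
            (\<exists>estar\<in>W. (\<forall>w\<in>W. (w, estar) \<in> R) \<and>
              (\<forall>f\<in>E. (estar, f) \<in> R \<and> f \<noteq> estar \<longrightarrow>
                  real (back_deg E R f) \<le> (1 - \<tau>) * real (card V)) \<and>
              (\<forall>e\<in>E. \<forall>f\<in>E. (f, e) \<in> R \<and> (e, estar) \<in> R \<longrightarrow> card f \<ge> card e))))))"
proof -
  define \<sigma> \<delta> c where "\<sigma> = \<tau> powr (1/4)" and "\<delta> = 3 * \<sigma> * K ^ 4"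
    and "c = (1 - \<tau> - 7 * \<sigma> / K)\<^sup>2"
  define g where "g = (1 + \<delta>)\<^sup>2 * (1 - \<tau>)\<^sup>2 - (1 + \<delta>) - \<delta> * c"
  have \<sigma>: "0 < \<sigma>" "\<sigma> < 1" "\<sigma>^4 = \<tau>"
    using assms(1,2) powr_less_mono2[of "1/4" \<tau> 1] powr_power[of \<tau> "1/4" 4]
    unfolding \<sigma>_def by auto
  have "0 < \<delta>" using \<sigma>(1) assms(3) unfolding \<delta>_def by simp
  have "0 < g"
    using parameter_gap_pos[OF \<sigma>(1,2) assms(3)] assms(4)
    unfolding g_def c_def \<delta>_def \<sigma>(3) \<sigma>_def[symmetric] by simp
  define r0 where "r0 = nat \<lceil>1 + 1 / (1 - \<tau>) + 2 * (1 + \<delta>)\<^sup>2 / g\<rceil>"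
  have "1 + 1 / (1 - \<tau>) + 2 * (1 + \<delta>)\<^sup>2 / g \<le> real r0"
    unfolding r0_def by (rule real_nat_ceiling_ge)
  then have thresholds: "1 \<le> (real k - 1) * (1 - \<tau>)" "(1 + \<delta>)\<^sup>2 * (2 / real k) \<le> g"
    if "r0 \<le> k" for k :: nat
    using edge_size_thresholds[OF assms(2) \<open>0 < g\<close>] of_nat_mono[OF that] by (meson order_trans)+
  show ?thesis unfolding \<sigma>_def[symmetric] \<delta>_def[symmetric] c_def[symmetric]
    using less_imp_le[OF assms(1)] assms(2) \<open>0 < \<delta>\<close>
    by (intro exI[of _ r0] allI impI linear_hypergraph_order_dichotomy)
      (auto simp del: times_divide_eq_right intro!: thresholds[unfolded g_def] intro: order_trans)
qed

end
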